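(* With the notation of the context, let $B(\epsilon)=\{x\in\mathbb{R}^d:\epsilon\le|x|\le1\}$. Then for every fixed $l\ge0$, every $\epsilon\in(0,1)$ and every $p$ with $\frac{2d}{d-1}<p\le\infty$, $$\lim_{k\to\infty}\frac{\|u_{klm}\|_{L^p(B(\epsilon))}}{\|u_{klm}\|_{L^p(\Omega_{\mathrm{ball}})}}=0 .$$
   Context: $L u=-\Delta u+\frac{c^2}{|x|^2}u$ on $\mathbb{R}^d$, $d\ge2$, $c\ge0$. Set $\nu_l=\sqrt{(l+\tfrac d2-1)^2+c^2}$. $J_\nu$ is the Bessel function of the first kind of order $\nu$ and $j_{\nu,k}$ its $k$-th positive zero. $\{Y_{lm}:1\le m\le\dim H_l\}$ is an orthonormal basis of the space $H_l$ of spherical harmonics of degree $l$ on $S^{d-1}$. $\Omega_{\mathrm{ball}}=\{|x|<1\}$, and $u_{klm}(r,\xi)=r^{1-d/2}J_{\nu_l}(j_{\nu_l,k}r)Y_{lm}(\xi)$ in spherical coordinates $x=r\xi$ are the Dirichlet eigenfunctions of $L$ in $\Omega_{\mathrm{ball}}$. *)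

theory Defs
  imports "HOL-Probability.Probability"
begin

definition bessel_J :: "real \<Rightarrow> real \<Rightarrow> real" where
  "bessel_J nu x = (\<Sum>n. (-1) ^ n / (fact n * Gamma (real n + nu + 1)) * (x / 2) powr (2 * real n + nu))"

definition bessel_zero :: "real \<Rightarrow> nat \<Rightarrow> real" where
  "bessel_zero nu k = (THE x. 0 < x \<and> bessel_J nu x = 0 \<and>
      card {y. 0 < y \<and> y < x \<and> bessel_J nu y = 0} = k - 1)"

definition nu_l :: "nat \<Rightarrow> real \<Rightarrow> nat \<Rightarrow> real" where
  "nu_l d c l = sqrt ((real l + real d / 2 - 1)\<^sup>2 + c\<^sup>2)"

definition hom_poly :: "nat \<Rightarrow> (real^'d \<Rightarrow> real) \<Rightarrow> bool" where
  "hom_poly l P \<longleftrightarrow> (\<exists>A :: ('d \<Rightarrow> nat) set. \<exists>a :: ('d \<Rightarrow> nat) \<Rightarrow> real.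
      finite A \<and> (\<forall>\<alpha>\<in>A. (\<Sum>i\<in>UNIV. \<alpha> i) = l) \<and>
      P = (\<lambda>x. \<Sum>\<alpha>\<in>A. a \<alpha> * (\<Prod>i\<in>UNIV. (x $ i) ^ (\<alpha> i))))"

definition laplacian :: "(real^'d \<Rightarrow> real) \<Rightarrow> real^'d \<Rightarrow> real" where
  "laplacian P x = (\<Sum>i\<in>UNIV. deriv (deriv (\<lambda>t. P (x + t *\<^sub>R axis i 1))) 0)"

definition spherical_harmonic :: "nat \<Rightarrow> (real^'d \<Rightarrow> real) \<Rightarrow> bool" where
  "spherical_harmonic l Y \<longleftrightarrow> (\<exists>P. hom_poly l P \<and> (\<forall>x. laplacian P x = 0) \<and>
      (\<forall>x. norm x = 1 \<longrightarrow> Y x = P x))"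

definition u_eig :: "real \<Rightarrow> nat \<Rightarrow> nat \<Rightarrow> (real^'d \<Rightarrow> real) \<Rightarrow> real^'d \<Rightarrow> real" where
  "u_eig c l k Y x =
     (let d = CARD('d); \<nu> = nu_l d c l
      in norm x powr (1 - real d / 2) * bessel_J \<nu> (bessel_zero \<nu> k * norm x) * Y (x /\<^sub>R norm x))"

definition Lp_norm_on :: "ereal \<Rightarrow> 'a::euclidean_space set \<Rightarrow> ('a \<Rightarrow> real) \<Rightarrow> real" where
  "Lp_norm_on p S f =
     (if p = \<infinity> then real_of_ereal (esssup (restrict_space lebesgue S) (\<lambda>x. ereal \<bar>f x\<bar>))
      else (LINT x:S|lebesgue. \<bar>f x\<bar> powr real_of_ereal p) powr (1 / real_of_ereal p))"

definition ball_domain :: "'a::euclidean_space set" where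
  "ball_domain = {x. norm x < 1}"

definition annulus :: "real \<Rightarrow> 'a::euclidean_space set" where
  "annulus \<epsilon> = {x. \<epsilon> \<le> norm x \<and> norm x \<le> 1}"

end

(*
  Write u_k = u_klm and j_k = j_{nu_l,k}. In the variable y = j_k x the eigenfunction is a fixed profile:
  u_k x = Phi (j_k x) / j_k^a with Phi y = |y|^a J_nu(|y|) Y(y/|y|) and a = 1 - d/2.
  Since J_nu(t) = O(t^(-1/2)), on the annulus |u_k| = O(j_k^(-1/2)) uniformly, so its L^p norm there is
  O(j_k^(-1/2)). Near a point y0 with Phi y0 <> 0, |Phi| stays >= delta > 0 on a ball of radius rho; hence
  |u_k| >= delta j_k^(-a) on a ball of radius rho / j_k inside the unit ball, and the L^p norm over the
  unit ball is at least of order j_k^(-a - d/p). The ratio is O(j_k^(a - 1/2 + d/p)), and the exponent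
  is negative exactly when p > 2d/(d-1). Finally j_k -> oo because the positive zeros of J_nu are
  discrete (J_nu is (t/2)^nu times an entire function) and unbounded (Sturm comparison).
*)

theory Submission
  imports Defs "HOL-Complex_Analysis.Complex_Analysis"
begin

definition bessel_coeff :: "real \<Rightarrow> nat \<Rightarrow> real" where
  "bessel_coeff \<nu> n = (-1) ^ n / (fact n * Gamma (real n + \<nu> + 1))"

lemma Gamma_nat_add_pos: "\<nu> \<ge> 0 \<Longrightarrow> Gamma (real n + \<nu> + 1) > 0"
  by (intro Gamma_real_pos) simp

lemma bessel_coeff_Suc:
  assumes "\<nu> \<ge> 0"
  shows "bessel_coeff \<nu> (Suc n) = - bessel_coeff \<nu> n / ((real n + 1) * (real n + \<nu> + 1))"
proof -
  have "real n + \<nu> + 1 \<notin> \<int>\<^sub>\<le>\<^sub>0" using assms nonpos_Ints_nonpos by fastforce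
  from Gamma_plus1[OF this]
  have "Gamma (real (Suc n) + \<nu> + 1) = (real n + \<nu> + 1) * Gamma (real n + \<nu> + 1)"
    by (simp add: add_ac)
  then show ?thesis using Gamma_nat_add_pos[OF assms, of n] assms
    by (simp add: bessel_coeff_def field_simps)
qed

lemma bessel_coeff_recurrence:
  assumes "\<nu> \<ge> 0"
  shows "(real n + 1) * (real n + \<nu> + 1) * bessel_coeff \<nu> (Suc n) + bessel_coeff \<nu> n = 0"
proof -
  have "(real n + 1) * (real n + \<nu> + 1) > 0" "real n + \<nu> + 1 \<noteq> 0" using assms by simp_all
  then show ?thesis unfolding bessel_coeff_Suc[OF assms, of n] by simp
qed

lemma summable_bessel_coeff:
  fixes z :: "'a::{real_normed_field,banach}"
  assumes "\<nu> \<ge> 0"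
  shows "summable (\<lambda>n. of_real (bessel_coeff \<nu> n) * z ^ n)"
proof (rule summable_ratio_test[where c="1/2" and N="nat \<lceil>2 * norm z\<rceil>"])
  fix n assume n: "nat \<lceil>2 * norm z\<rceil> \<le> n"
  define D where "D = (real n + 1) * (real n + \<nu> + 1)"
  have D: "D \<ge> real n + 1" using assms by (simp add: D_def)
  have ratio: "norm z / D \<le> 1/2" using n D by (simp add: field_simps)
  have "of_real (bessel_coeff \<nu> (Suc n)) * z ^ Suc n = (of_real (bessel_coeff \<nu> n) * z ^ n) * (- z / of_real D)"
    unfolding bessel_coeff_Suc[OF assms, of n] D_def[symmetric] by (simp add: field_simps)
  then have "norm (of_real (bessel_coeff \<nu> (Suc n)) * z ^ Suc n)
        = norm (of_real (bessel_coeff \<nu> n) * z ^ n) * (norm z / D)"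
    using D by (simp add: norm_mult norm_divide)
  also have "\<dots> \<le> norm (of_real (bessel_coeff \<nu> n) * z ^ n) * (1/2)"
    using ratio by (intro mult_left_mono) auto
  finally show "norm (of_real (bessel_coeff \<nu> (Suc n)) * z ^ Suc n)
      \<le> 1/2 * norm (of_real (bessel_coeff \<nu> n) * z ^ n)"
    by simp
qed simp

lemma summable_bessel_coeff_real:
  "\<nu> \<ge> 0 \<Longrightarrow> summable (\<lambda>n. bessel_coeff \<nu> n * (s::real) ^ n)"
  using summable_bessel_coeff[of \<nu> s] by simp

text \<open>\<open>J\<^sub>\<nu>(t) = (t/2)\<^sup>\<nu> g\<^sub>\<nu>((t/2)\<^sup>2)\<close> for the entire power series \<open>g\<^sub>\<nu> = bessel_series \<nu>\<close>;
  all analytic facts about \<open>J\<^sub>\<nu>\<close> are derived from \<open>g\<^sub>\<nu>\<close>.\<close>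

definition bessel_series :: "real \<Rightarrow> real \<Rightarrow> real" where
  "bessel_series \<nu> s = (\<Sum>n. bessel_coeff \<nu> n * s ^ n)"

definition bessel_series_deriv :: "real \<Rightarrow> real \<Rightarrow> real" where
  "bessel_series_deriv \<nu> s = (\<Sum>n. diffs (bessel_coeff \<nu>) n * s ^ n)"

definition bessel_series_deriv2 :: "real \<Rightarrow> real \<Rightarrow> real" where
  "bessel_series_deriv2 \<nu> s = (\<Sum>n. diffs (diffs (bessel_coeff \<nu>)) n * s ^ n)"

lemma summable_bessel_series_deriv:
  "\<nu> \<ge> 0 \<Longrightarrow> summable (\<lambda>n. diffs (bessel_coeff \<nu>) n * (s::real) ^ n)"
  by (rule termdiff_converges_all) (rule summable_bessel_coeff_real)

lemma summable_bessel_series_deriv2: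
  "\<nu> \<ge> 0 \<Longrightarrow> summable (\<lambda>n. diffs (diffs (bessel_coeff \<nu>)) n * (s::real) ^ n)"
  by (rule termdiff_converges_all) (rule summable_bessel_series_deriv)

lemma has_real_derivative_bessel_series:
  "\<nu> \<ge> 0 \<Longrightarrow> (bessel_series \<nu> has_real_derivative bessel_series_deriv \<nu> s) (at s)"
  unfolding bessel_series_def bessel_series_deriv_def
  by (rule termdiffs_strong_converges_everywhere) (rule summable_bessel_coeff_real)

lemma has_real_derivative_bessel_series_deriv:
  "\<nu> \<ge> 0 \<Longrightarrow> (bessel_series_deriv \<nu> has_real_derivative bessel_series_deriv2 \<nu> s) (at s)"
  unfolding bessel_series_deriv_def bessel_series_deriv2_def
  by (rule termdiffs_strong_converges_everywhere) (rule summable_bessel_series_deriv)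

lemma continuous_on_bessel_series: "\<nu> \<ge> 0 \<Longrightarrow> continuous_on S (bessel_series \<nu>)"
  by (metis DERIV_isCont continuous_at_imp_continuous_on has_real_derivative_bessel_series)

lemma bessel_series_ode:
  assumes "\<nu> \<ge> 0"
  shows "s * bessel_series_deriv2 \<nu> s + (\<nu> + 1) * bessel_series_deriv \<nu> s + bessel_series \<nu> s = 0"
proof -
  define c where "c = bessel_coeff \<nu>"
  have "(\<lambda>n. s * (diffs (diffs c) n * s ^ n)) sums (s * bessel_series_deriv2 \<nu> s)"
    unfolding bessel_series_deriv2_def c_def
    by (intro sums_mult summable_sums summable_bessel_series_deriv2 assms)
  moreover have "(\<lambda>n. s * (diffs (diffs c) n * s ^ n)) = (\<lambda>n. real (Suc n) * diffs c (Suc n) * s ^ Suc n)"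
    by (auto simp: diffs_def)
  ultimately have "(\<lambda>n. real n * diffs c n * s ^ n) sums (s * bessel_series_deriv2 \<nu> s)"
    using sums_Suc_iff[of "\<lambda>n. real n * diffs c n * s ^ n"] by simp
  moreover have "(\<lambda>n. (\<nu> + 1) * (diffs c n * s ^ n)) sums ((\<nu> + 1) * bessel_series_deriv \<nu> s)"
    unfolding bessel_series_deriv_def c_def
    by (intro sums_mult summable_sums summable_bessel_series_deriv assms)
  moreover have "(\<lambda>n. c n * s ^ n) sums (bessel_series \<nu> s)"
    unfolding bessel_series_def c_def by (intro summable_sums summable_bessel_coeff_real assms)
  ultimately have "(\<lambda>n. real n * diffs c n * s ^ n + (\<nu> + 1) * (diffs c n * s ^ n) + c n * s ^ n)
     sums (s * bessel_series_deriv2 \<nu> s + (\<nu> + 1) * bessel_series_deriv \<nu> s + bessel_series \<nu> s)"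
    by (intro sums_add)
  moreover have "real n * diffs c n * s ^ n + (\<nu> + 1) * (diffs c n * s ^ n) + c n * s ^ n
      = ((real n + 1) * (real n + \<nu> + 1) * c (Suc n) + c n) * s ^ n" for n
    by (simp add: diffs_def algebra_simps)
  ultimately show ?thesis
    using bessel_coeff_recurrence[OF assms] sums_unique sums_zero unfolding c_def by fastforce
qed

lemma bessel_J_eq_bessel_series:
  assumes "\<nu> \<ge> 0" "t \<ge> 0"
  shows "bessel_J \<nu> t = (t / 2) powr \<nu> * bessel_series \<nu> ((t / 2)\<^sup>2)"
proof (cases "t = 0")
  case True then show ?thesis by (simp add: bessel_J_def)
next
  case False
  then have t: "t / 2 > 0" using assms by simp
  have "(t / 2) powr (2 * real n + \<nu>) = (t / 2) powr \<nu> * ((t / 2)\<^sup>2) ^ n" for n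
  proof -
    have "(t / 2) powr (2 * real n) = ((t / 2)\<^sup>2) ^ n"
      using powr_realpow[OF t, of "2 * n"] by (simp add: power_mult)
    then show ?thesis by (simp add: powr_add)
  qed
  then have "(\<lambda>n. (-1) ^ n / (fact n * Gamma (real n + \<nu> + 1)) * (t / 2) powr (2 * real n + \<nu>))
     = (\<lambda>n. (t / 2) powr \<nu> * (bessel_coeff \<nu> n * ((t / 2)\<^sup>2) ^ n))"
    by (simp add: bessel_coeff_def ac_simps)
  then show ?thesis
    unfolding bessel_J_def bessel_series_def
    using suminf_mult[OF summable_bessel_coeff_real[OF assms(1)]] by simp
qed

lemma bessel_series_0_pos: "\<nu> \<ge> 0 \<Longrightarrow> bessel_series \<nu> 0 > 0"
  using powser_zero[of "bessel_coeff \<nu>"] Gamma_nat_add_pos[of \<nu> 0]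
  by (simp add: bessel_series_def bessel_coeff_def)

lemma continuous_on_bessel_J: "\<nu> \<ge> 0 \<Longrightarrow> continuous_on {0<..} (bessel_J \<nu>)"
  by (rule continuous_on_eq[where f="\<lambda>t. (t / 2) powr \<nu> * bessel_series \<nu> ((t / 2)\<^sup>2)"])
     (auto intro!: continuous_intros continuous_on_compose2[OF continuous_on_bessel_series]
           simp: bessel_J_eq_bessel_series)

section \<open>Second order equations of oscillator type\<close>

text \<open>Sturm comparison with \<open>sin ((x - a) / 2)\<close>, a positive solution of \<open>w'' = - w / 4\<close> on
  \<open>]a, a + 2\<pi>[\<close>: if \<open>v\<close> stayed positive, their Wronskian \<open>W\<close> would be nonincreasing
  (as \<open>q \<ge> 1/4\<close>) and yet climb from \<open>- v a / 2 < 0\<close> to \<open>v (a + 2\<pi>) / 2 > 0\<close>.\<close>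

lemma sturm_comparison_sin:
  fixes v v' q :: "real \<Rightarrow> real"
  assumes dv: "\<And>x. x \<in> {a..a + 2 * pi} \<Longrightarrow> (v has_real_derivative v' x) (at x)"
    and dv': "\<And>x. x \<in> {a..a + 2 * pi} \<Longrightarrow> (v' has_real_derivative - q x * v x) (at x)"
    and q: "\<And>x. x \<in> {a..a + 2 * pi} \<Longrightarrow> q x \<ge> 1/4"
  shows "\<exists>x\<in>{a..a + 2 * pi}. v x \<le> 0"
proof (rule ccontr)
  assume "\<not> ?thesis"
  then have pos: "\<And>x. x \<in> {a..a + 2 * pi} \<Longrightarrow> v x > 0" by force
  define W where "W x = v' x * sin ((x - a) / 2) - v x * cos ((x - a) / 2) / 2" for x
  have "W (a + 2 * pi) \<le> W a"
  proof (rule DERIV_nonpos_imp_nonincreasing[of a "a + 2 * pi" W])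
    fix x assume x: "a \<le> x" "x \<le> a + 2 * pi"
    have "(W has_real_derivative (1/4 - q x) * (v x * sin ((x - a) / 2))) (at x)"
      unfolding W_def[abs_def] using x
      by (auto intro!: derivative_eq_intros dv dv' simp: field_simps)
    moreover have "0 \<le> sin ((x - a) / 2)" by (rule sin_ge_zero) (use x in auto)
    then have "(1/4 - q x) * (v x * sin ((x - a) / 2)) \<le> 0"
      using q[of x] pos[of x] x by (intro mult_nonpos_nonneg) auto
    ultimately show "\<exists>y. (W has_real_derivative y) (at x) \<and> y \<le> 0" by blast
  qed simp
  then show False using pos[of a] pos[of "a + 2 * pi"] by (simp add: W_def)
qed

lemma oscillatory_solution_has_zero:
  fixes v v' q :: "real \<Rightarrow> real"
  assumes dv: "\<And>x. x \<ge> a \<Longrightarrow> (v has_real_derivative v' x) (at x)"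
    and dv': "\<And>x. x \<ge> a \<Longrightarrow> (v' has_real_derivative - q x * v x) (at x)"
    and q: "\<And>x. x \<ge> a \<Longrightarrow> q x \<ge> 1/4"
  shows "\<exists>x\<ge>a. v x = 0"
proof (rule ccontr)
  assume no_zero: "\<not> ?thesis"
  have cont: "continuous_on {a..b} v" for b
    using dv by (intro DERIV_continuous_on[of _ _ v']) (auto intro: has_field_derivative_at_within)
  have same_sign: "v a * v x > 0" if "x \<ge> a" for x
  proof (rule ccontr)
    assume "\<not> v a * v x > 0"
    then have "v a \<le> 0 \<and> 0 \<le> v x \<or> v x \<le> 0 \<and> 0 \<le> v a"
      using mult_pos_pos[of "v a" "v x"] mult_neg_neg[of "v a" "v x"] by force
    then have "\<exists>y\<ge>a. y \<le> x \<and> v y = 0"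
      using IVT'[of v a 0 x] IVT2'[of v x 0 a] cont[of x] that by blast
    then show False using no_zero by blast
  qed
  have "\<exists>x\<in>{a..a + 2 * pi}. v a * v x \<le> 0"
    by (rule sturm_comparison_sin[where v'="\<lambda>x. v a * v' x" and q=q])
       (use dv dv' q in \<open>auto intro!: derivative_eq_intros\<close>)
  then show False using same_sign by force
qed

lemma bounded_solution_increasing_coeff:
  fixes v v' q q' :: "real \<Rightarrow> real"
  assumes dv: "\<And>x. x \<ge> a \<Longrightarrow> (v has_real_derivative v' x) (at x)"
    and dv': "\<And>x. x \<ge> a \<Longrightarrow> (v' has_real_derivative - q x * v x) (at x)"
    and dq: "\<And>x. x \<ge> a \<Longrightarrow> (q has_real_derivative q' x) (at x)"
    and q: "\<And>x. x \<ge> a \<Longrightarrow> q x > 0" and q': "\<And>x. x \<ge> a \<Longrightarrow> q' x \<ge> 0"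
  shows "\<exists>C. \<forall>x\<ge>a. \<bar>v x\<bar> \<le> C"
proof -
  define E where "E x = (v' x)\<^sup>2 / q x + (v x)\<^sup>2" for x
  have "E x \<le> E a" if "x \<ge> a" for x
  proof (rule DERIV_nonpos_imp_nonincreasing[of a x E])
    fix y assume y: "a \<le> y" "y \<le> x"
    have "(E has_real_derivative - q' y / (q y)\<^sup>2 * (v' y)\<^sup>2) (at y)"
      unfolding E_def[abs_def] using y q[of y]
      by (auto intro!: derivative_eq_intros dv dv' dq simp: field_simps power2_eq_square)
    moreover have "- q' y / (q y)\<^sup>2 * (v' y)\<^sup>2 \<le> 0" using q'[of y] y by simp
    ultimately show "\<exists>d. (E has_real_derivative d) (at y) \<and> d \<le> 0" by blast
  qed (use that in simp)
  moreover have "(v x)\<^sup>2 \<le> E x" if "x \<ge> a" for x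
    using q[OF that] by (simp add: E_def)
  ultimately have "\<bar>v x\<bar> \<le> sqrt (E a)" if "x \<ge> a" for x
    using that real_sqrt_le_mono[of "(v x)\<^sup>2" "E a"] by force
  then show ?thesis by blast
qed

lemma bounded_solution_decreasing_coeff:
  fixes v v' q q' :: "real \<Rightarrow> real"
  assumes dv: "\<And>x. x \<ge> a \<Longrightarrow> (v has_real_derivative v' x) (at x)"
    and dv': "\<And>x. x \<ge> a \<Longrightarrow> (v' has_real_derivative - q x * v x) (at x)"
    and dq: "\<And>x. x \<ge> a \<Longrightarrow> (q has_real_derivative q' x) (at x)"
    and q: "\<And>x. x \<ge> a \<Longrightarrow> q x \<ge> m" "m > 0" and q': "\<And>x. x \<ge> a \<Longrightarrow> q' x \<le> 0"
  shows "\<exists>C. \<forall>x\<ge>a. \<bar>v x\<bar> \<le> C"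
proof -
  define E where "E x = (v' x)\<^sup>2 + q x * (v x)\<^sup>2" for x
  have "E x \<le> E a" if "x \<ge> a" for x
  proof (rule DERIV_nonpos_imp_nonincreasing[of a x E])
    fix y assume y: "a \<le> y" "y \<le> x"
    have "(E has_real_derivative q' y * (v y)\<^sup>2) (at y)"
      unfolding E_def[abs_def] using y
      by (auto intro!: derivative_eq_intros dv dv' dq simp: field_simps power2_eq_square)
    moreover have "q' y * (v y)\<^sup>2 \<le> 0" using q'[of y] y by (simp add: mult_nonpos_nonneg)
    ultimately show "\<exists>d. (E has_real_derivative d) (at y) \<and> d \<le> 0" by blast
  qed (use that in simp)
  moreover have "m * (v x)\<^sup>2 \<le> E x" if "x \<ge> a" for x
    using mult_right_mono[OF q(1)[OF that] zero_le_power2[of "v x"]] zero_le_power2[of "v' x"]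
    unfolding E_def by linarith
  ultimately have "(v x)\<^sup>2 \<le> E a / m" if "x \<ge> a" for x
    using that q(2) by (force simp: field_simps)
  then have "\<bar>v x\<bar> \<le> sqrt (E a / m)" if "x \<ge> a" for x
    using that real_sqrt_le_mono[of "(v x)\<^sup>2" "E a / m"] by force
  then show ?thesis by blast
qed

section \<open>The Liouville normal form of the Bessel equation\<close>

text \<open>The substitution \<open>w(x) = 2\<^sup>\<nu> \<surd>x J\<^sub>\<nu>(x)\<close> turns Bessel's equation into the
  oscillator \<open>w'' = - (1 - (\<nu>\<^sup>2 - 1/4) / x\<^sup>2) w\<close>, whose coefficient tends to \<open>1\<close>: this
  yields both the unboundedness of the zeros and the decay \<open>J\<^sub>\<nu>(x) = O(x\<^sup>-\<^sup>1\<^sup>/\<^sup>2)\<close>.\<close>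

definition bessel_normal :: "real \<Rightarrow> real \<Rightarrow> real" where
  "bessel_normal \<nu> x = x powr (\<nu> + 1/2) * bessel_series \<nu> (x\<^sup>2 / 4)"

definition bessel_normal_deriv :: "real \<Rightarrow> real \<Rightarrow> real" where
  "bessel_normal_deriv \<nu> x = x powr (\<nu> + 1/2) *
     ((\<nu> + 1/2) / x * bessel_series \<nu> (x\<^sup>2 / 4) + x / 2 * bessel_series_deriv \<nu> (x\<^sup>2 / 4))"

lemma bessel_normal_eq:
  assumes "\<nu> \<ge> 0" "x > 0"
  shows "bessel_normal \<nu> x = 2 powr \<nu> * sqrt x * bessel_J \<nu> x"
proof -
  have "x powr (\<nu> + 1/2) = 2 powr \<nu> * (x / 2) powr \<nu> * sqrt x"
    using assms by (simp add: powr_add powr_divide powr_half_sqrt)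
  then show ?thesis using assms
    by (simp add: bessel_normal_def bessel_J_eq_bessel_series power_divide)
qed

lemma has_real_derivative_bessel_series_comp [derivative_intros]:
  assumes "\<nu> \<ge> 0" "(f has_real_derivative f') (at x)"
  shows "((\<lambda>x. bessel_series \<nu> (f x)) has_real_derivative bessel_series_deriv \<nu> (f x) * f') (at x)"
  using DERIV_chain2[OF has_real_derivative_bessel_series[OF assms(1)] assms(2)] .

lemma has_real_derivative_bessel_series_deriv_comp [derivative_intros]:
  assumes "\<nu> \<ge> 0" "(f has_real_derivative f') (at x)"
  shows "((\<lambda>x. bessel_series_deriv \<nu> (f x)) has_real_derivative bessel_series_deriv2 \<nu> (f x) * f') (at x)"
  using DERIV_chain2[OF has_real_derivative_bessel_series_deriv[OF assms(1)] assms(2)] .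

lemma has_real_derivative_bessel_normal:
  assumes "\<nu> \<ge> 0" "x > 0"
  shows "(bessel_normal \<nu> has_real_derivative bessel_normal_deriv \<nu> x) (at x)"
proof -
  define \<mu> where "\<mu> = \<nu> + 1/2"
  have pw: "x powr (\<mu> - 1) = x powr \<mu> / x" using assms by (simp add: powr_diff)
  show ?thesis
    unfolding bessel_normal_def[abs_def] bessel_normal_deriv_def \<mu>_def[symmetric] using assms
    by (auto intro!: derivative_eq_intros simp: pw field_simps)
qed

lemma has_real_derivative_bessel_normal_deriv:
  assumes "\<nu> \<ge> 0" "x > 0"
  shows "(bessel_normal_deriv \<nu> has_real_derivative
           - (1 - (\<nu>\<^sup>2 - 1/4) / x\<^sup>2) * bessel_normal \<nu> x) (at x)"
proof -
  define \<mu> where "\<mu> = \<nu> + 1/2"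
  define G G' G'' where "G y = bessel_series \<nu> (y\<^sup>2 / 4)"
    and "G' y = bessel_series_deriv \<nu> (y\<^sup>2 / 4)" and "G'' y = bessel_series_deriv2 \<nu> (y\<^sup>2 / 4)" for y
  have dG: "(G has_real_derivative G' x * (x / 2)) (at x)"
    unfolding G_def[abs_def] G'_def using assms by (auto intro!: derivative_eq_intros)
  have dG': "(G' has_real_derivative G'' x * (x / 2)) (at x)"
    unfolding G'_def[abs_def] G''_def using assms by (auto intro!: derivative_eq_intros)
  have dpow: "((\<lambda>y. y powr \<mu>) has_real_derivative \<mu> * (x powr \<mu> / x)) (at x)"
    using has_real_derivative_powr[OF assms(2), of \<mu>] assms by (simp add: powr_diff)
  have dinv: "((\<lambda>y. \<mu> / y) has_real_derivative - \<mu> / x\<^sup>2) (at x)"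
    using assms by (auto intro!: derivative_eq_intros simp: power2_eq_square)
  have dhalf: "((\<lambda>y. y / 2) has_real_derivative 1 / 2) (at x)"
    by (auto intro!: derivative_eq_intros)
  have ode: "G'' x = - 4 * ((\<mu> + 1/2) * G' x + G x) / x\<^sup>2"
    using bessel_series_ode[OF assms(1), of "x\<^sup>2 / 4"] assms(2)
    unfolding G_def G'_def G''_def \<mu>_def by (simp add: field_simps)
  have \<kappa>: "\<nu>\<^sup>2 - 1/4 = \<mu>\<^sup>2 - \<mu>" by (simp add: \<mu>_def power2_eq_square algebra_simps)
  have w: "bessel_normal \<nu> x = x powr \<mu> * G x" by (simp add: bessel_normal_def \<mu>_def G_def)
  have w': "bessel_normal_deriv \<nu> = (\<lambda>y. y powr \<mu> * (\<mu> / y * G y + y / 2 * G' y))"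
    by (simp add: bessel_normal_deriv_def \<mu>_def G_def G'_def fun_eq_iff)
  show ?thesis
    unfolding \<kappa> w w'
    by (rule DERIV_cong[OF DERIV_mult[OF dpow DERIV_add[OF DERIV_mult[OF dinv dG]
          DERIV_mult[OF dhalf dG']]]])
       (use assms in \<open>simp add: ode field_simps power2_eq_square\<close>)
qed

lemma bessel_normal_bounded:
  assumes "\<nu> \<ge> 0"
  shows "\<exists>C X. 0 < X \<and> (\<forall>x\<ge>X. \<bar>bessel_normal \<nu> x\<bar> \<le> C)"
proof -
  define \<kappa> where "\<kappa> = \<nu>\<^sup>2 - 1/4"
  define q where "q x = 1 - \<kappa> / x\<^sup>2" for x
  define X where "X = \<bar>\<kappa>\<bar> + 1"
  have X: "X \<ge> 1" by (simp add: X_def)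
  have dq: "(q has_real_derivative 2 * \<kappa> / x ^ 3) (at x)" if "x \<ge> X" for x
    unfolding q_def[abs_def] using that X
    by (auto intro!: derivative_eq_intros simp: field_simps power2_eq_square power3_eq_cube)
  have dw: "(bessel_normal \<nu> has_real_derivative bessel_normal_deriv \<nu> x) (at x)"
    and dw': "(bessel_normal_deriv \<nu> has_real_derivative - q x * bessel_normal \<nu> x) (at x)"
    if "x \<ge> X" for x
    using has_real_derivative_bessel_normal[OF assms] has_real_derivative_bessel_normal_deriv[OF assms]
      that X by (auto simp: q_def \<kappa>_def)
  have "\<exists>C. \<forall>x\<ge>X. \<bar>bessel_normal \<nu> x\<bar> \<le> C"
  proof (cases "\<kappa> \<ge> 0")
    case True
    have "q x > 0" if "x \<ge> X" for x
    proof -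
      have "\<kappa> < x" "x \<le> x\<^sup>2" using that X True by (auto simp: X_def power2_eq_square)
      then show ?thesis using that X by (simp add: q_def field_simps)
    qed
    then show ?thesis
      using X True by (intro bounded_solution_increasing_coeff[OF dw dw' dq]) auto
  next
    case False
    have "q x \<ge> 1" if "x \<ge> X" for x
      using False by (simp add: q_def divide_nonpos_nonneg)
    moreover have "2 * \<kappa> / x ^ 3 \<le> 0" if "x \<ge> X" for x
      using False that X by (simp add: divide_nonpos_pos)
    ultimately show ?thesis
      by (intro bounded_solution_decreasing_coeff[OF dw dw' dq, where m=1]) auto
  qed
  then show ?thesis using X by (meson less_le_trans zero_less_one)
qed

lemma bessel_J_decay:
  assumes "\<nu> \<ge> 0"
  shows "\<exists>C X. 0 < X \<and> 0 \<le> C \<and> (\<forall>x\<ge>X. \<bar>bessel_J \<nu> x\<bar> \<le> C * x powr (-1/2))"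
proof -
  obtain C X where X: "0 < X" and C: "\<And>x. x \<ge> X \<Longrightarrow> \<bar>bessel_normal \<nu> x\<bar> \<le> C"
    using bessel_normal_bounded[OF assms] by blast
  have "\<bar>bessel_J \<nu> x\<bar> \<le> C * x powr (-1/2)" if x: "x \<ge> X" for x
  proof -
    have "1 \<le> 2 powr \<nu>" using assms by (intro ge_one_powr_ge_zero) auto
    then have "\<bar>bessel_J \<nu> x\<bar> * sqrt x \<le> 2 powr \<nu> * (\<bar>bessel_J \<nu> x\<bar> * sqrt x)"
      using mult_right_mono[of 1 "2 powr \<nu>" "\<bar>bessel_J \<nu> x\<bar> * sqrt x"] x X by simp
    also have "\<dots> = \<bar>bessel_normal \<nu> x\<bar>"
      using x X assms by (simp add: bessel_normal_eq abs_mult)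
    also have "\<dots> \<le> C" using C[OF x] .
    finally show ?thesis using x X by (simp add: powr_minus_divide powr_half_sqrt field_simps)
  qed
  moreover have "0 \<le> C" using C[of X] by simp
  ultimately show ?thesis using X by blast
qed

section \<open>The positive zeros of \<open>J\<^sub>\<nu>\<close>\<close>

lemma ex_card_less_eq:
  fixes Z :: "real set"
  assumes fin: "\<And>R. finite {y\<in>Z. y \<le> R}" and unb: "\<And>X. \<exists>x\<in>Z. X < x"
  shows "\<exists>x\<in>Z. card {y\<in>Z. y < x} = n"
proof (induction n)
  case 0
  obtain z where "z \<in> Z" using unb by blast
  then have ne: "{y\<in>Z. y \<le> z} \<noteq> {}" by auto
  define m where "m = Min {y\<in>Z. y \<le> z}"
  have "m \<in> Z" "m \<le> z" using Min_in[OF fin ne] by (auto simp: m_def)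
  have "\<not> y < m" if "y \<in> Z" for y
    using that Min_le[OF fin, of y z] \<open>m \<le> z\<close> unfolding m_def by force
  then have "card {y\<in>Z. y < m} = 0" by (metis (mono_tags, lifting) card.empty empty_Collect_eq)
  with \<open>m \<in> Z\<close> show ?case by blast
next
  case (Suc n)
  then obtain x where x: "x \<in> Z" "card {y\<in>Z. y < x} = n" by blast
  obtain z where z: "z \<in> Z" "x < z" using unb by blast
  define F where "F = {y\<in>Z. x < y \<and> y \<le> z}"
  have F: "finite F" "F \<noteq> {}"
    using z by (auto simp: F_def intro: finite_subset[OF _ fin[of z]])
  define m where "m = Min F"
  have mF: "m \<in> F" using F Min_in m_def by blast
  have "{y\<in>Z. y < m} = insert x {y\<in>Z. y < x}"
    using mF x Min_le[OF F(1)] by (fastforce simp: F_def m_def)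
  moreover have "finite {y\<in>Z. y < x}" by (rule finite_subset[OF _ fin[of x]]) auto
  ultimately have "card {y\<in>Z. y < m} = Suc n" using x by simp
  then show ?case using mF by (auto simp: F_def)
qed

lemma ex1_card_less_eq:
  fixes Z :: "real set"
  assumes fin: "\<And>R. finite {y\<in>Z. y \<le> R}" and unb: "\<And>X. \<exists>x\<in>Z. X < x"
  shows "\<exists>!x. x \<in> Z \<and> card {y\<in>Z. y < x} = n"
proof (rule ex_ex1I)
  show "\<exists>x. x \<in> Z \<and> card {y\<in>Z. y < x} = n" using ex_card_less_eq[OF fin unb] by blast
next
  have card_strict_mono: "card {y\<in>Z. y < x1} < card {y\<in>Z. y < x2}"
    if "x1 \<in> Z" "x1 < x2" for x1 x2
  proof -
    have "insert x1 {y\<in>Z. y < x1} \<subseteq> {y\<in>Z. y < x2}" using that by auto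
    moreover have "finite {y\<in>Z. y < x2}" by (rule finite_subset[OF _ fin[of x2]]) auto
    ultimately have "card (insert x1 {y\<in>Z. y < x1}) \<le> card {y\<in>Z. y < x2}"
      by (rule card_mono[rotated])
    moreover have "finite {y\<in>Z. y < x1}" by (rule finite_subset[OF _ fin[of x1]]) auto
    ultimately show ?thesis by simp
  qed
  fix x y assume "x \<in> Z \<and> card {y\<in>Z. y < x} = n" "y \<in> Z \<and> card {z\<in>Z. z < y} = n"
  then show "x = y"
    using card_strict_mono[of x y] card_strict_mono[of y x] by (cases x y rule: linorder_cases) auto
qed

lemma filterlim_card_less_eq_at_top:
  fixes Z :: "real set" and j :: "nat \<Rightarrow> real"
  assumes fin: "\<And>R. finite {y\<in>Z. y \<le> R}" and j: "\<And>k. card {y\<in>Z. y < j k} = k - 1"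
  shows "filterlim j at_top sequentially"
  unfolding filterlim_at_top
proof
  fix R :: real
  show "eventually (\<lambda>k. R \<le> j k) sequentially"
  proof (rule eventually_sequentiallyI[of "card {y\<in>Z. y \<le> R} + 2"])
    fix k assume k: "card {y\<in>Z. y \<le> R} + 2 \<le> k"
    show "R \<le> j k"
    proof (rule ccontr)
      assume "\<not> R \<le> j k"
      then have "card {y\<in>Z. y < j k} \<le> card {y\<in>Z. y \<le> R}" by (intro card_mono fin) auto
      then show False using j[of k] k by simp
    qed
  qed
qed

definition bessel_series_complex :: "real \<Rightarrow> complex \<Rightarrow> complex" where
  "bessel_series_complex \<nu> z = (\<Sum>n. of_real (bessel_coeff \<nu> n) * z ^ n)"

lemma holomorphic_bessel_series_complex:
  assumes "\<nu> \<ge> 0"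
  shows "bessel_series_complex \<nu> holomorphic_on UNIV"
proof -
  have "(bessel_series_complex \<nu> has_field_derivative
          (\<Sum>n. diffs (\<lambda>n. of_real (bessel_coeff \<nu> n)) n * z ^ n)) (at z)" for z
    unfolding bessel_series_complex_def[abs_def]
    by (rule termdiffs_strong_converges_everywhere) (rule summable_bessel_coeff[OF assms])
  then show ?thesis by (subst holomorphic_on_open) auto
qed

lemma bessel_series_complex_of_real:
  assumes "\<nu> \<ge> 0"
  shows "bessel_series_complex \<nu> (of_real s) = of_real (bessel_series \<nu> s)"
proof -
  have "(\<lambda>n. bessel_coeff \<nu> n * s ^ n) sums bessel_series \<nu> s"
    unfolding bessel_series_def by (intro summable_sums summable_bessel_coeff_real assms)
  then have "(\<lambda>n. of_real (bessel_coeff \<nu> n * s ^ n) :: complex) sums of_real (bessel_series \<nu> s)"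
    by (subst sums_of_real_iff)
  then have "(\<lambda>n. of_real (bessel_coeff \<nu> n) * (of_real s) ^ n :: complex) sums of_real (bessel_series \<nu> s)"
    by (simp only: of_real_mult of_real_power)
  then show ?thesis unfolding bessel_series_complex_def by (rule sums_unique[symmetric])
qed

text \<open>Zeros of the real-analytic \<open>g\<^sub>\<nu>\<close> cannot accumulate because \<open>g\<^sub>\<nu>\<close> extends to a
  nonconstant entire function.\<close>

lemma finite_bessel_series_zeros:
  assumes "\<nu> \<ge> 0"
  shows "finite {s. 0 \<le> s \<and> s \<le> R \<and> bessel_series \<nu> s = 0}"
proof -
  let ?g = "bessel_series_complex \<nu>"
  have nonzero: "?g 0 \<noteq> 0"
    using bessel_series_complex_of_real[OF assms, of 0] bessel_series_0_pos[OF assms] by simp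
  have "finite {z\<in>cball 0 R. ?g z = 0}"
  proof (cases "?g constant_on UNIV")
    case True
    then have "{z\<in>cball 0 R. ?g z = 0} = {}" using nonzero by (auto simp: constant_on_def)
    then show ?thesis by (metis finite.emptyI)
  next
    case False
    then show ?thesis
      by (intro holomorphic_compact_finite_zeros[OF holomorphic_bessel_series_complex[OF assms]]) auto
  qed
  moreover have "of_real ` {s. 0 \<le> s \<and> s \<le> R \<and> bessel_series \<nu> s = 0} \<subseteq> {z\<in>cball 0 R. ?g z = 0}"
    using bessel_series_complex_of_real[OF assms] by auto
  ultimately have "finite (of_real ` {s. 0 \<le> s \<and> s \<le> R \<and> bessel_series \<nu> s = 0} :: complex set)"
    by (rule finite_subset[rotated])
  then show ?thesis by (rule finite_imageD) (simp add: inj_on_def)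
qed

definition bessel_zeros :: "real \<Rightarrow> real set" where
  "bessel_zeros \<nu> = {x. 0 < x \<and> bessel_J \<nu> x = 0}"

lemma finite_bessel_zeros_le:
  assumes "\<nu> \<ge> 0"
  shows "finite {y\<in>bessel_zeros \<nu>. y \<le> R}"
proof (rule finite_imageD)
  let ?sq = "\<lambda>y::real. (y / 2)\<^sup>2"
  have "?sq ` {y\<in>bessel_zeros \<nu>. y \<le> R} \<subseteq> {s. 0 \<le> s \<and> s \<le> ?sq R \<and> bessel_series \<nu> s = 0}"
    using assms by (auto simp: bessel_zeros_def bessel_J_eq_bessel_series intro!: power_mono)
  then show "finite (?sq ` {y\<in>bessel_zeros \<nu>. y \<le> R})"
    by (rule finite_subset) (rule finite_bessel_series_zeros[OF assms])
  show "inj_on ?sq {y\<in>bessel_zeros \<nu>. y \<le> R}"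
    by (rule inj_onI) (simp add: bessel_zeros_def power2_eq_iff_nonneg)
qed

lemma bessel_zeros_unbounded:
  assumes "\<nu> \<ge> 0"
  shows "\<exists>x\<in>bessel_zeros \<nu>. X < x"
proof -
  define \<kappa> where "\<kappa> = \<nu>\<^sup>2 - 1/4"
  define a where "a = max X 0 + 2 * \<bar>\<kappa>\<bar> + 1"
  have "1/4 \<le> 1 - \<kappa> / x\<^sup>2" if "a \<le> x" for x
  proof -
    have "1 \<le> x" "2 * \<bar>\<kappa>\<bar> + 1 \<le> x" using that by (auto simp: a_def)
    moreover from this have "x \<le> x\<^sup>2" by (simp add: power2_eq_square)
    ultimately have "2 * \<kappa> \<le> x\<^sup>2" "0 < x\<^sup>2" by auto
    then have "\<kappa> / x\<^sup>2 \<le> 1/2" by (simp add: field_simps)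
    then show ?thesis by linarith
  qed
  moreover have "a > 0" by (simp add: a_def)
  ultimately obtain x where x: "x \<ge> a" "bessel_normal \<nu> x = 0"
    using oscillatory_solution_has_zero[of a "bessel_normal \<nu>" "bessel_normal_deriv \<nu>"
        "\<lambda>x. 1 - \<kappa> / x\<^sup>2"]
      has_real_derivative_bessel_normal[OF assms] has_real_derivative_bessel_normal_deriv[OF assms]
    unfolding \<kappa>_def by force
  moreover have "X < x" "0 < x" using x(1) by (auto simp: a_def)
  ultimately show ?thesis using assms by (auto simp: bessel_zeros_def bessel_normal_eq)
qed

lemma bessel_zero_spec:
  assumes "\<nu> \<ge> 0"
  shows "bessel_zero \<nu> k \<in> bessel_zeros \<nu>"
    and "card {y\<in>bessel_zeros \<nu>. y < bessel_zero \<nu> k} = k - 1"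
proof -
  have "bessel_zero \<nu> k = (THE x. x \<in> bessel_zeros \<nu> \<and> card {y\<in>bessel_zeros \<nu>. y < x} = k - 1)"
    unfolding bessel_zero_def bessel_zeros_def by (simp add: conj_ac)
  moreover have "\<exists>!x. x \<in> bessel_zeros \<nu> \<and> card {y\<in>bessel_zeros \<nu>. y < x} = k - 1"
    using ex1_card_less_eq finite_bessel_zeros_le[OF assms] bessel_zeros_unbounded[OF assms] by blast
  ultimately show "bessel_zero \<nu> k \<in> bessel_zeros \<nu>"
    and "card {y\<in>bessel_zeros \<nu>. y < bessel_zero \<nu> k} = k - 1"
    using theI'[of "\<lambda>x. x \<in> bessel_zeros \<nu> \<and> card {y\<in>bessel_zeros \<nu>. y < x} = k - 1"] by auto
qed

lemma bessel_zero_pos: "\<nu> \<ge> 0 \<Longrightarrow> bessel_zero \<nu> k > 0"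
  using bessel_zero_spec(1)[of \<nu> k] by (simp add: bessel_zeros_def)

lemma filterlim_bessel_zero_at_top:
  assumes "\<nu> \<ge> 0"
  shows "filterlim (bessel_zero \<nu>) at_top sequentially"
  by (rule filterlim_card_less_eq_at_top[OF finite_bessel_zeros_le[OF assms] bessel_zero_spec(2)[OF assms]])

lemma ex_bessel_J_nonzero:
  assumes "\<nu> \<ge> 0"
  shows "\<exists>t>0. bessel_J \<nu> t \<noteq> 0"
proof -
  have "infinite {0<..1::real}" by (simp add: infinite_Ioc)
  then have "\<not> {0<..1} \<subseteq> {y\<in>bessel_zeros \<nu>. y \<le> 1}"
    using finite_subset[OF _ finite_bessel_zeros_le[OF assms]] by blast
  then show ?thesis by (auto simp: bessel_zeros_def)
qed

section \<open>Elementary bounds for \<open>L\<^sup>p\<close> norms\<close>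

text \<open>For \<open>p = \<infinity>\<close> the exponent \<open>1 / real_of_ereal p\<close> below is \<open>1 / 0 = 0\<close>, so each bound
  covers both cases.\<close>

lemma Lp_norm_on_nonneg:
  fixes f :: "'a::euclidean_space \<Rightarrow> real"
  assumes f: "f \<in> borel_measurable lebesgue"
  shows "0 \<le> Lp_norm_on p S f"
proof (cases "p = \<infinity>")
  case True
  define M where "M = restrict_space lebesgue S"
  have g: "(\<lambda>x. ereal \<bar>f x\<bar>) \<in> borel_measurable M"
    unfolding M_def by (intro measurable_restrict_space1) (use f in measurable)
  have "0 \<le> real_of_ereal (esssup M (\<lambda>x. ereal \<bar>f x\<bar>))"
  proof (cases "emeasure M (space M) = 0")
    case True
    then show ?thesis using esssup_zero_space[OF True g] by simp
  next
    case False
    have "esssup M (\<lambda>x. 0) \<le> esssup M (\<lambda>x. ereal \<bar>f x\<bar>)" by (rule esssup_mono) auto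
    then show ?thesis unfolding esssup_const[OF False] by (rule real_of_ereal_pos)
  qed
  then show ?thesis using True by (simp add: Lp_norm_on_def M_def)
qed (simp add: Lp_norm_on_def)

lemma esssup_restrict_le:
  fixes f :: "'a::euclidean_space \<Rightarrow> real"
  assumes "S \<in> sets lebesgue" "f \<in> borel_measurable lebesgue" "\<And>x. x \<in> S \<Longrightarrow> \<bar>f x\<bar> \<le> B"
  shows "esssup (restrict_space lebesgue S) (\<lambda>x. ereal \<bar>f x\<bar>) \<le> ereal B"
proof (rule esssup_I)
  show "(\<lambda>x. ereal \<bar>f x\<bar>) \<in> borel_measurable (restrict_space lebesgue S)"
    by (intro measurable_restrict_space1) (use assms in measurable)
  show "AE x in restrict_space lebesgue S. ereal \<bar>f x\<bar> \<le> ereal B"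
    using assms by (subst AE_restrict_space_iff) auto
qed

lemma esssup_restrict_ge:
  fixes f :: "'a::euclidean_space \<Rightarrow> real"
  assumes S: "S \<in> sets lebesgue"
    and T: "T \<subseteq> S" "T \<in> sets lebesgue" "emeasure lebesgue T > 0"
    and c: "\<And>x. x \<in> T \<Longrightarrow> c \<le> \<bar>f x\<bar>"
  shows "ereal c \<le> esssup (restrict_space lebesgue S) (\<lambda>x. ereal \<bar>f x\<bar>)"
proof (rule ccontr)
  define M where "M = restrict_space lebesgue S"
  assume "\<not> ?thesis"
  then have lt: "esssup M (\<lambda>x. ereal \<bar>f x\<bar>) < ereal c" by (simp add: M_def not_le)
  have "AE x in M. ereal \<bar>f x\<bar> < ereal c"
    using esssup_AE[of "\<lambda>x. ereal \<bar>f x\<bar>" M] by eventually_elim (metis lt le_less_trans)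
  then have "AE x in lebesgue. x \<in> S \<longrightarrow> \<bar>f x\<bar> < c"
    unfolding M_def using S by (subst (asm) AE_restrict_space_iff) auto
  then have "AE x in lebesgue. x \<notin> T"
    by (rule AE_mp) (use T(1) c in \<open>force intro!: AE_I2\<close>)
  then have "emeasure lebesgue T = 0"
    using AE_iff_measurable[of T lebesgue "\<lambda>x. x \<notin> T"] T(2) by simp
  then show False using T(3) by simp
qed

lemma set_integrable_powr_bounded:
  fixes f :: "'a::euclidean_space \<Rightarrow> real"
  assumes "S \<in> lmeasurable" "f \<in> borel_measurable lebesgue" "\<And>x. x \<in> S \<Longrightarrow> \<bar>f x\<bar> \<le> B" "r > 0"
  shows "set_integrable lebesgue S (\<lambda>x. \<bar>f x\<bar> powr r)"
  unfolding set_integrable_def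
proof (rule integrableI_bounded_set_indicator[where B="B powr r"])
  show "(\<lambda>x. \<bar>f x\<bar> powr r) \<in> borel_measurable lebesgue" using assms(2) by measurable
  show "AE x in lebesgue. x \<in> S \<longrightarrow> norm (\<bar>f x\<bar> powr r) \<le> B powr r"
    using assms(3,4) by (auto intro!: powr_mono2)
qed (use assms(1) in \<open>auto simp: fmeasurable_def\<close>)

lemma Lp_norm_on_le:
  fixes f :: "'a::euclidean_space \<Rightarrow> real"
  assumes S: "S \<in> lmeasurable" "measure lebesgue S > 0"
    and f: "f \<in> borel_measurable lebesgue"
    and B: "\<And>x. x \<in> S \<Longrightarrow> \<bar>f x\<bar> \<le> B" "0 \<le> B"
    and p: "p > 0"
  shows "Lp_norm_on p S f \<le> B * measure lebesgue S powr (1 / real_of_ereal p)"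
proof (cases "p = \<infinity>")
  case True
  have "esssup (restrict_space lebesgue S) (\<lambda>x. ereal \<bar>f x\<bar>) \<le> ereal B"
    using S f B by (intro esssup_restrict_le) auto
  then have "real_of_ereal (esssup (restrict_space lebesgue S) (\<lambda>x. ereal \<bar>f x\<bar>)) \<le> B"
    using B(2) by (cases "esssup (restrict_space lebesgue S) (\<lambda>x. ereal \<bar>f x\<bar>)") auto
  then show ?thesis using True S(2) by (simp add: Lp_norm_on_def)
next
  case False
  define r where "r = real_of_ereal p"
  have r: "r > 0" using p False by (cases p) (auto simp: r_def)
  have nonneg: "0 \<le> (LINT x:S|lebesgue. \<bar>f x\<bar> powr r)"
    unfolding set_lebesgue_integral_def by (rule Bochner_Integration.integral_nonneg) auto
  have "(LINT x:S|lebesgue. \<bar>f x\<bar> powr r) \<le> (LINT x:S|lebesgue. B powr r)"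
    using S B r set_integrable_powr_bounded[OF S(1), of "\<lambda>_. B" B r]
    by (intro set_integral_mono set_integrable_powr_bounded f) (auto intro!: powr_mono2)
  also have "\<dots> = measure lebesgue S * B powr r"
    using set_integral_const[OF fmeasurableD[OF S(1)], of "B powr r"] fmeasurableD2[OF S(1)]
    by (simp add: infinity_ennreal_def)
  finally have "(LINT x:S|lebesgue. \<bar>f x\<bar> powr r) powr (1 / r) \<le> (measure lebesgue S * B powr r) powr (1 / r)"
    using r nonneg by (intro powr_mono2) auto
  also have "\<dots> = B * measure lebesgue S powr (1 / r)"
    using r B(2) by (simp add: powr_mult powr_powr)
  finally show ?thesis using False by (simp add: Lp_norm_on_def r_def)
qed

lemma set_integral_powr_ge:
  fixes f :: "'a::euclidean_space \<Rightarrow> real"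
  assumes S: "S \<in> lmeasurable"
    and f: "f \<in> borel_measurable lebesgue"
    and B: "\<And>x. x \<in> S \<Longrightarrow> \<bar>f x\<bar> \<le> B"
    and T: "T \<subseteq> S" "T \<in> sets lebesgue"
    and c: "\<And>x. x \<in> T \<Longrightarrow> c \<le> \<bar>f x\<bar>" "0 \<le> c"
    and r: "r > 0"
  shows "measure lebesgue T * c powr r \<le> (LINT x:S|lebesgue. \<bar>f x\<bar> powr r)"
proof -
  have T_fin: "T \<in> lmeasurable" by (rule fmeasurableI2[OF S T])
  have "measure lebesgue T * c powr r = (LINT x:T|lebesgue. c powr r)"
    using set_integral_const[OF fmeasurableD[OF T_fin], of "c powr r"] fmeasurableD2[OF T_fin]
    by (simp add: infinity_ennreal_def)
  also have "\<dots> = (LINT x:S|lebesgue. indicator T x * c powr r)"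
    using T(1) unfolding set_lebesgue_integral_def
    by (intro Bochner_Integration.integral_cong) (auto simp: indicator_def)
  also have "\<dots> \<le> (LINT x:S|lebesgue. \<bar>f x\<bar> powr r)"
  proof (rule set_integral_mono)
    show "set_integrable lebesgue S (\<lambda>x. indicator T x * c powr r)"
      unfolding set_integrable_def
      by (rule integrableI_bounded_set_indicator[where B="c powr r"])
         (use S T T_fin in \<open>auto simp: indicator_def fmeasurable_def\<close>)
    show "set_integrable lebesgue S (\<lambda>x. \<bar>f x\<bar> powr r)"
      by (rule set_integrable_powr_bounded[OF S f B r])
    show "indicator T x * c powr r \<le> \<bar>f x\<bar> powr r" if "x \<in> S" for x
      using c r by (auto simp: indicator_def intro!: powr_mono2)
  qed
  finally show ?thesis .
qed

lemma Lp_norm_on_ge: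
  fixes f :: "'a::euclidean_space \<Rightarrow> real"
  assumes S: "S \<in> lmeasurable"
    and f: "f \<in> borel_measurable lebesgue"
    and B: "\<And>x. x \<in> S \<Longrightarrow> \<bar>f x\<bar> \<le> B"
    and T: "T \<subseteq> S" "T \<in> sets lebesgue" "measure lebesgue T > 0"
    and c: "\<And>x. x \<in> T \<Longrightarrow> c \<le> \<bar>f x\<bar>" "0 \<le> c"
    and p: "p > 0"
  shows "c * measure lebesgue T powr (1 / real_of_ereal p) \<le> Lp_norm_on p S f"
proof (cases "p = \<infinity>")
  case True
  have T_fin: "T \<in> lmeasurable" by (rule fmeasurableI2[OF S T(1,2)])
  have "ereal c \<le> esssup (restrict_space lebesgue S) (\<lambda>x. ereal \<bar>f x\<bar>)"
    using S T T_fin c by (intro esssup_restrict_ge) (auto simp: emeasure_eq_measure2)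
  moreover have "esssup (restrict_space lebesgue S) (\<lambda>x. ereal \<bar>f x\<bar>) \<le> ereal B"
    using S f B by (intro esssup_restrict_le) auto
  ultimately have "c \<le> real_of_ereal (esssup (restrict_space lebesgue S) (\<lambda>x. ereal \<bar>f x\<bar>))"
    by (cases "esssup (restrict_space lebesgue S) (\<lambda>x. ereal \<bar>f x\<bar>)") auto
  then show ?thesis using True T(3) by (simp add: Lp_norm_on_def)
next
  case False
  define r where "r = real_of_ereal p"
  have r: "r > 0" using p False by (cases p) (auto simp: r_def)
  have "(measure lebesgue T * c powr r) powr (1 / r) \<le> (LINT x:S|lebesgue. \<bar>f x\<bar> powr r) powr (1 / r)"
    using r c(2) set_integral_powr_ge[OF S f B T(1,2) c r] by (intro powr_mono2) auto
  moreover have "(measure lebesgue T * c powr r) powr (1 / r) = c * measure lebesgue T powr (1 / r)"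
    using r c(2) by (simp add: powr_mult powr_powr)
  ultimately show ?thesis using False by (simp add: Lp_norm_on_def r_def)
qed

definition bessel_profile :: "real \<Rightarrow> real \<Rightarrow> ('a::real_normed_vector \<Rightarrow> real) \<Rightarrow> 'a \<Rightarrow> real" where
  "bessel_profile \<nu> a Y y = norm y powr a * bessel_J \<nu> (norm y) * Y (y /\<^sub>R norm y)"

lemma bessel_profile_scaleR:
  fixes x :: "'a::real_normed_vector"
  assumes "j > 0"
  shows "norm x powr a * bessel_J \<nu> (j * norm x) * Y (x /\<^sub>R norm x)
       = bessel_profile \<nu> a Y (j *\<^sub>R x) / j powr a"
proof (cases "x = 0")
  case False
  have "(j *\<^sub>R x) /\<^sub>R (j * norm x) = x /\<^sub>R norm x" using assms by simp
  then show ?thesis using assms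
    by (simp add: bessel_profile_def powr_mult field_simps)
qed (simp add: bessel_profile_def)

lemma continuous_on_bessel_profile:
  fixes Y :: "'a::real_normed_vector \<Rightarrow> real"
  assumes "\<nu> \<ge> 0" "continuous_on (sphere 0 1) Y"
  shows "continuous_on (- {0}) (bessel_profile \<nu> a Y)"
  unfolding bessel_profile_def[abs_def]
  by (intro continuous_intros continuous_on_compose2[OF continuous_on_bessel_J[OF assms(1)]]
        continuous_on_compose2[OF assms(2)]) (auto simp: inverse_eq_divide split: if_splits)

lemma bessel_profile_decay:
  fixes Y :: "'a::real_normed_vector \<Rightarrow> real"
  assumes "\<nu> \<ge> 0" and M: "\<And>\<xi>. norm \<xi> = 1 \<Longrightarrow> \<bar>Y \<xi>\<bar> \<le> M"
  shows "\<exists>C X. 0 < X \<and> 0 \<le> C \<and>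
           (\<forall>y. X \<le> norm y \<longrightarrow> \<bar>bessel_profile \<nu> a Y y\<bar> \<le> C * norm y powr (a - 1/2))"
proof -
  obtain C X where X: "0 < X" "0 \<le> C" and C: "\<And>t. t \<ge> X \<Longrightarrow> \<bar>bessel_J \<nu> t\<bar> \<le> C * t powr (-1/2)"
    using bessel_J_decay[OF assms(1)] by blast
  have "\<bar>bessel_profile \<nu> a Y y\<bar> \<le> (C * max M 0) * norm y powr (a - 1/2)" if y: "X \<le> norm y" for y
  proof -
    have "norm (y /\<^sub>R norm y) = 1" using y X by (auto simp: inverse_eq_divide)
    moreover have "\<bar>bessel_profile \<nu> a Y y\<bar> = norm y powr a * \<bar>bessel_J \<nu> (norm y)\<bar> * \<bar>Y (y /\<^sub>R norm y)\<bar>"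
      by (simp add: bessel_profile_def abs_mult)
    ultimately have "\<bar>bessel_profile \<nu> a Y y\<bar> \<le> norm y powr a * (C * norm y powr (-1/2)) * max M 0"
      using y X C[OF y] M[of "y /\<^sub>R norm y"] by (auto intro!: mult_mono mult_left_mono)
    also have "\<dots> = (C * max M 0) * norm y powr (a - 1/2)"
      by (simp add: powr_add[symmetric])
    finally show ?thesis .
  qed
  then show ?thesis using X by (intro exI[of _ "C * max M 0"] exI[of _ X]) auto
qed

lemma bessel_profile_bounded:
  fixes Y :: "'a::real_normed_vector \<Rightarrow> real"
  assumes "\<nu> \<ge> 0" "\<nu> + a \<ge> 0" and M: "\<And>\<xi>. norm \<xi> = 1 \<Longrightarrow> \<bar>Y \<xi>\<bar> \<le> M"
  shows "\<exists>B. \<forall>y. norm y \<le> R \<longrightarrow> \<bar>bessel_profile \<nu> a Y y\<bar> \<le> B"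
proof -
  have "bounded (bessel_series \<nu> ` {0..(R / 2)\<^sup>2})"
    by (intro compact_imp_bounded compact_continuous_image continuous_on_bessel_series assms) simp
  then obtain G where G: "\<forall>s\<in>{0..(R / 2)\<^sup>2}. \<bar>bessel_series \<nu> s\<bar> \<le> G"
    unfolding bounded_iff by auto
  have "\<bar>bessel_profile \<nu> a Y y\<bar> \<le> (R / 2) powr (\<nu> + a) * 2 powr a * G * M"
    if y: "y \<noteq> 0" "norm y \<le> R" for y
  proof -
    have "(norm y / 2)\<^sup>2 \<in> {0..(R / 2)\<^sup>2}" using y by (auto intro!: power_mono)
    then have g: "\<bar>bessel_series \<nu> ((norm y / 2)\<^sup>2)\<bar> \<le> G" using G by blast
    have "norm y powr a * (norm y / 2) powr \<nu> = (norm y / 2) powr (\<nu> + a) * 2 powr a"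
      using y by (simp add: powr_add powr_divide field_simps)
    then have "\<bar>bessel_profile \<nu> a Y y\<bar>
        = (norm y / 2) powr (\<nu> + a) * 2 powr a * \<bar>bessel_series \<nu> ((norm y / 2)\<^sup>2)\<bar> * \<bar>Y (y /\<^sub>R norm y)\<bar>"
      using assms(1) by (simp add: bessel_profile_def bessel_J_eq_bessel_series abs_mult mult_ac)
    also have "\<dots> \<le> (R / 2) powr (\<nu> + a) * 2 powr a * G * M"
      using y assms(2) g M[of "y /\<^sub>R norm y"] powr_mono2[of "\<nu> + a" "norm y / 2" "R / 2"]
      by (intro mult_mono) (auto simp: inverse_eq_divide)
    finally show ?thesis .
  qed
  moreover have "bessel_profile \<nu> a Y 0 = 0" by (simp add: bessel_profile_def)
  ultimately show ?thesis
    by (metis abs_zero max.cobounded1 max.cobounded2 order.trans)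
qed

lemma ex_bessel_profile_nonzero:
  fixes Y :: "'a::real_normed_vector \<Rightarrow> real"
  assumes "\<nu> \<ge> 0" "norm \<xi> = 1" "Y \<xi> \<noteq> 0"
  shows "\<exists>y. y \<noteq> 0 \<and> bessel_profile \<nu> a Y y \<noteq> 0"
proof -
  obtain t where "t > 0" "bessel_J \<nu> t \<noteq> 0" using ex_bessel_J_nonzero[OF assms(1)] by blast
  moreover have "\<xi> \<noteq> 0" using assms(2) by auto
  ultimately show ?thesis using assms
    by (intro exI[of _ "t *\<^sub>R \<xi>"]) (simp add: bessel_profile_def)
qed

lemma isCont_abs_ge_half:
  fixes f :: "'a::metric_space \<Rightarrow> real"
  assumes "isCont f y" "f y \<noteq> 0"
  shows "\<exists>\<rho>>0. \<forall>z\<in>ball y \<rho>. \<bar>f y\<bar> / 2 \<le> \<bar>f z\<bar>"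
proof -
  obtain \<rho> where \<rho>: "\<rho> > 0" "\<And>z. dist z y < \<rho> \<Longrightarrow> dist (f z) (f y) < \<bar>f y\<bar> / 2"
    using assms unfolding continuous_at_eps_delta by (metis half_gt_zero zero_less_abs_iff)
  moreover have "\<bar>f y\<bar> / 2 \<le> \<bar>f z\<bar>" if "z \<in> ball y \<rho>" for z
    using \<rho>(2)[of z] that abs_triangle_ineq2[of "f y" "f z"]
    by (simp add: dist_commute dist_real_def abs_minus_commute)
  ultimately show ?thesis by blast
qed

lemma bessel_profile_abs_ge_on_ball:
  fixes Y :: "'a::real_normed_vector \<Rightarrow> real"
  assumes "\<nu> \<ge> 0" "continuous_on (sphere 0 1) Y" "norm \<xi> = 1" "Y \<xi> \<noteq> 0"
  shows "\<exists>y\<^sub>0 \<rho> \<delta>. 0 < \<rho> \<and> 0 < \<delta> \<and> (\<forall>z\<in>ball y\<^sub>0 \<rho>. \<delta> \<le> \<bar>bessel_profile \<nu> a Y z\<bar>)"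
proof -
  obtain y\<^sub>0 where y\<^sub>0: "y\<^sub>0 \<noteq> 0" "bessel_profile \<nu> a Y y\<^sub>0 \<noteq> 0"
    using ex_bessel_profile_nonzero[of \<nu> \<xi> Y a] assms(1,3,4) by blast
  then have "isCont (bessel_profile \<nu> a Y) y\<^sub>0"
    using continuous_on_bessel_profile[OF assms(1,2)]
    by (simp add: continuous_on_eq_continuous_at open_Compl)
  then obtain \<rho> where "\<rho> > 0" "\<forall>z\<in>ball y\<^sub>0 \<rho>. \<bar>bessel_profile \<nu> a Y y\<^sub>0\<bar> / 2 \<le> \<bar>bessel_profile \<nu> a Y z\<bar>"
    using isCont_abs_ge_half y\<^sub>0(2) by blast
  then show ?thesis using y\<^sub>0(2) by (intro exI[of _ y\<^sub>0] exI[of _ \<rho>] exI[of _ "\<bar>bessel_profile \<nu> a Y y\<^sub>0\<bar> / 2"]) auto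
qed

lemma spherical_harmonic_continuous_on_sphere:
  assumes "spherical_harmonic l Y"
  shows "continuous_on (sphere 0 1) Y"
proof -
  obtain P where P: "hom_poly l P" and YP: "\<And>x. norm x = 1 \<Longrightarrow> Y x = P x"
    using assms unfolding spherical_harmonic_def by blast
  from P obtain A a where "P = (\<lambda>x. \<Sum>\<alpha>\<in>A. a \<alpha> * (\<Prod>i\<in>UNIV. (x $ i) ^ (\<alpha> i)))"
    unfolding hom_poly_def by blast
  then have "continuous_on (sphere 0 1) P" by (auto intro!: continuous_intros)
  then show ?thesis by (rule continuous_on_eq) (simp add: YP)
qed

lemma spherical_harmonic_bounded:
  assumes "spherical_harmonic l Y"
  shows "\<exists>M. \<forall>\<xi>. norm \<xi> = 1 \<longrightarrow> \<bar>Y \<xi>\<bar> \<le> M"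
proof -
  have "bounded (Y ` sphere 0 1)"
    by (intro compact_imp_bounded compact_continuous_image
        spherical_harmonic_continuous_on_sphere[OF assms] compact_sphere)
  then show ?thesis unfolding bounded_iff by (metis image_eqI mem_sphere_0 real_norm_def)
qed

lemma nu_l_ge: "real d / 2 - 1 \<le> nu_l d c l" if "d \<ge> 2"
proof -
  have "real d / 2 - 1 \<le> \<bar>real l + real d / 2 - 1\<bar>" by simp
  also have "\<dots> = sqrt ((real l + real d / 2 - 1)\<^sup>2)" by simp
  also have "\<dots> \<le> nu_l d c l" unfolding nu_l_def by (rule real_sqrt_le_mono) simp
  finally show ?thesis .
qed

lemma u_eig_eq_bessel_profile:
  fixes Y :: "real^'d \<Rightarrow> real" and c :: real and l k :: nat
  defines "\<nu> \<equiv> nu_l CARD('d) c l" and "a \<equiv> 1 - real CARD('d) / 2"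
  shows "u_eig c l k Y = (\<lambda>x. bessel_profile \<nu> a Y (bessel_zero \<nu> k *\<^sub>R x) / bessel_zero \<nu> k powr a)"
proof
  fix x
  have "\<nu> \<ge> 0" by (simp add: \<nu>_def nu_l_def)
  show "u_eig c l k Y x = bessel_profile \<nu> a Y (bessel_zero \<nu> k *\<^sub>R x) / bessel_zero \<nu> k powr a"
    unfolding u_eig_def Let_def \<nu>_def[symmetric] a_def[symmetric]
    by (rule bessel_profile_scaleR[OF bessel_zero_pos[OF \<open>\<nu> \<ge> 0\<close>]])
qed

lemma borel_measurable_u_eig:
  fixes Y :: "real^'d \<Rightarrow> real"
  assumes "spherical_harmonic l Y"
  shows "u_eig c l k Y \<in> borel_measurable lebesgue"
proof -
  define \<nu> j where "\<nu> = nu_l CARD('d) c l" and "j = bessel_zero \<nu> k"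
  have "\<nu> \<ge> 0" "j > 0" by (simp_all add: \<nu>_def nu_l_def j_def bessel_zero_pos)
  have "continuous_on (- {0}) (\<lambda>x. bessel_profile \<nu> (1 - real CARD('d) / 2) Y (j *\<^sub>R x) / j powr (1 - real CARD('d) / 2))"
    using \<open>j > 0\<close>
    by (intro continuous_intros continuous_on_compose2[OF continuous_on_bessel_profile[OF \<open>\<nu> \<ge> 0\<close>
          spherical_harmonic_continuous_on_sphere[OF assms]]]) auto
  then have "continuous_on (- {0}) (u_eig c l k Y)"
    by (simp add: u_eig_eq_bessel_profile \<nu>_def j_def)
  then have "u_eig c l k Y \<in> borel_measurable borel"
    by (intro borel_measurable_continuous_countable_exceptions[of "{0}"]) auto
  then show ?thesis by (intro measurable_completion) simp
qed

lemma annulus_eq: "(annulus \<epsilon> :: 'a::euclidean_space set) = cball 0 1 - ball 0 \<epsilon>"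
  by (auto simp: annulus_def)

lemma annulus_lmeasurable: "(annulus \<epsilon> :: 'a::euclidean_space set) \<in> lmeasurable"
  unfolding annulus_eq by (rule fmeasurable_Diff[OF lmeasurable_cball fmeasurableD[OF lmeasurable_ball]])

lemma measure_annulus_pos:
  assumes "0 < \<epsilon>" "\<epsilon> < 1"
  shows "measure lebesgue (annulus \<epsilon> :: 'a::euclidean_space set) > 0"
proof -
  obtain b :: 'a where b: "norm b = (1 + \<epsilon>) / 2" using vector_choose_size[of "(1 + \<epsilon>) / 2"] assms by auto
  have "ball b ((1 - \<epsilon>) / 2) \<subseteq> annulus \<epsilon>"
  proof
    fix x assume "x \<in> ball b ((1 - \<epsilon>) / 2)"
    then have "norm (x - b) < (1 - \<epsilon>) / 2" by (simp add: dist_norm norm_minus_commute)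
    moreover have "norm x \<le> norm b + norm (x - b)" "norm b \<le> norm x + norm (x - b)"
      using norm_triangle_ineq[of b "x - b"] norm_triangle_ineq[of x "b - x"]
      by (simp_all add: norm_minus_commute)
    ultimately show "x \<in> annulus \<epsilon>" using b by (simp add: annulus_def; linarith)
  qed
  then have "measure lebesgue (ball b ((1 - \<epsilon>) / 2)) \<le> measure lebesgue (annulus \<epsilon> :: 'a set)"
    by (intro measure_mono_fmeasurable annulus_lmeasurable) auto
  moreover have "measure lebesgue (ball b ((1 - \<epsilon>) / 2)) > 0"
    using content_ball_pos[of "(1 - \<epsilon>) / 2" b] assms(2) by simp
  ultimately show ?thesis by linarith
qed

lemma ball_domain_eq: "ball_domain = ball 0 1"
  by (auto simp: ball_domain_def)

section \<open>Concentration of \<open>u\<^sub>k\<close> near the origin\<close>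

lemma Lp_norm_on_annulus_dilate_le:
  fixes \<Phi> :: "'a::euclidean_space \<Rightarrow> real"
  assumes meas: "(\<lambda>x. \<Phi> (j *\<^sub>R x) / j powr a) \<in> borel_measurable lebesgue"
    and decay: "\<And>y. X \<le> norm y \<Longrightarrow> \<bar>\<Phi> y\<bar> \<le> C * norm y powr (a - 1/2)" "0 \<le> C"
    and "a \<le> 1/2" "0 < \<epsilon>" "\<epsilon> < 1" "X \<le> j * \<epsilon>" "j > 0" "p > 0"
  shows "Lp_norm_on p (annulus \<epsilon>) (\<lambda>x. \<Phi> (j *\<^sub>R x) / j powr a)
           \<le> C * \<epsilon> powr (a - 1/2) * measure lebesgue (annulus \<epsilon> :: 'a set) powr (1 / real_of_ereal p)
             * j powr (-1/2)"
proof -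
  have "\<bar>\<Phi> (j *\<^sub>R x) / j powr a\<bar> \<le> C * \<epsilon> powr (a - 1/2) * j powr (-1/2)" if "x \<in> annulus \<epsilon>" for x
  proof -
    have x: "\<epsilon> \<le> norm x" using that by (simp add: annulus_def)
    then have "X \<le> norm (j *\<^sub>R x)" using assms(7,8) \<open>0 < \<epsilon>\<close> by (simp add: order_trans)
    from decay(1)[OF this] have "\<bar>\<Phi> (j *\<^sub>R x)\<bar> \<le> C * (j * norm x) powr (a - 1/2)"
      using \<open>j > 0\<close> by simp
    then have "\<bar>\<Phi> (j *\<^sub>R x) / j powr a\<bar> \<le> C * (j * norm x) powr (a - 1/2) / j powr a"
      by (simp add: divide_right_mono)
    also have "\<dots> = C * norm x powr (a - 1/2) * (j powr (a - 1/2) / j powr a)"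
      using \<open>j > 0\<close> by (simp add: powr_mult)
    also have "\<dots> = C * norm x powr (a - 1/2) * j powr (-1/2)"
      by (simp flip: powr_diff)
    also have "\<dots> \<le> C * \<epsilon> powr (a - 1/2) * j powr (-1/2)"
      using x assms(4,5) decay(2)
      by (intro mult_right_mono mult_left_mono powr_mono2') auto
    finally show ?thesis .
  qed
  then have "Lp_norm_on p (annulus \<epsilon>) (\<lambda>x. \<Phi> (j *\<^sub>R x) / j powr a)
      \<le> C * \<epsilon> powr (a - 1/2) * j powr (-1/2) * measure lebesgue (annulus \<epsilon> :: 'a set) powr (1 / real_of_ereal p)"
    using assms(5,6,9) decay(2)
    by (intro Lp_norm_on_le[OF annulus_lmeasurable measure_annulus_pos meas]) auto
  then show ?thesis by (simp add: mult_ac)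
qed

lemma Lp_norm_on_unit_ball_dilate_ge:
  fixes \<Phi> :: "'a::euclidean_space \<Rightarrow> real"
  assumes meas: "(\<lambda>x. \<Phi> (j *\<^sub>R x) / j powr a) \<in> borel_measurable lebesgue"
    and bounded: "\<And>y. norm y \<le> j \<Longrightarrow> \<bar>\<Phi> y\<bar> \<le> B"
    and lower: "\<And>z. z \<in> ball y\<^sub>0 \<rho> \<Longrightarrow> \<delta> \<le> \<bar>\<Phi> z\<bar>" "0 \<le> \<delta>"
    and "0 < \<rho>" "norm y\<^sub>0 + \<rho> \<le> j" "p > 0"
  shows "\<delta> * (unit_ball_vol DIM('a) * \<rho> ^ DIM('a)) powr (1 / real_of_ereal p)
           * j powr (- a - DIM('a) / real_of_ereal p)
         \<le> Lp_norm_on p (ball 0 1) (\<lambda>x. \<Phi> (j *\<^sub>R x) / j powr a)"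
proof -
  define s where "s = 1 / real_of_ereal p"
  define T where "T = ball (y\<^sub>0 /\<^sub>R j) (\<rho> / j)"
  have j: "j > 0" using assms(5,6) by (smt (verit) norm_ge_zero)
  have jT: "j *\<^sub>R x \<in> ball y\<^sub>0 \<rho>" if "x \<in> T" for x
  proof -
    have "j *\<^sub>R x - y\<^sub>0 = j *\<^sub>R (x - y\<^sub>0 /\<^sub>R j)" using j by (simp add: algebra_simps)
    then have "dist (j *\<^sub>R x) y\<^sub>0 = j * dist x (y\<^sub>0 /\<^sub>R j)" using j by (simp add: dist_norm)
    then show ?thesis using that j by (simp add: T_def dist_commute field_simps)
  qed
  have "T \<subseteq> ball 0 1"
  proof
    fix x assume "x \<in> T"
    then have "norm (j *\<^sub>R x - y\<^sub>0) < \<rho>" using jT by (simp add: dist_norm norm_minus_commute)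
    moreover have "j * norm x - norm y\<^sub>0 \<le> norm (j *\<^sub>R x - y\<^sub>0)"
      using norm_triangle_ineq2[of "j *\<^sub>R x" y\<^sub>0] j by simp
    ultimately have "j * norm x < j * 1" using assms(6) by linarith
    then show "x \<in> ball 0 1" using j by (simp add: mult_less_cancel_left_pos)
  qed
  moreover have "\<bar>\<Phi> (j *\<^sub>R x) / j powr a\<bar> \<le> B / j powr a" if "x \<in> ball 0 1" for x
    using that j bounded[of "j *\<^sub>R x"] by (simp add: divide_right_mono)
  moreover have "\<delta> / j powr a \<le> \<bar>\<Phi> (j *\<^sub>R x) / j powr a\<bar>" if "x \<in> T" for x
    using lower(1)[OF jT[OF that]] j by (simp add: divide_right_mono)
  moreover have mT: "measure lebesgue T = unit_ball_vol DIM('a) * (\<rho> / j) ^ DIM('a)"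
    using assms(5) j by (simp add: T_def content_ball)
  ultimately have "\<delta> / j powr a * measure lebesgue T powr s \<le> Lp_norm_on p (ball 0 1) (\<lambda>x. \<Phi> (j *\<^sub>R x) / j powr a)"
    unfolding s_def using assms(4,5,7) j
    by (intro Lp_norm_on_ge[OF lmeasurable_ball meas]) (auto simp: T_def)
  also have "\<delta> / j powr a * measure lebesgue T powr s
      = \<delta> * (unit_ball_vol DIM('a) * \<rho> ^ DIM('a)) powr s * j powr (- a - DIM('a) * s)"
    using assms(5) j
    by (simp add: mT powr_mult powr_divide powr_realpow[symmetric] powr_powr powr_diff
        powr_minus divide_simps)
  finally show ?thesis by (simp add: s_def)
qed

lemma u_eig_annulus_Lp_le:
  fixes Y :: "real^'d \<Rightarrow> real" and c \<epsilon> :: real and l :: nat and p :: ereal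
  defines "j \<equiv> bessel_zero (nu_l CARD('d) c l)"
  assumes "CARD('d) \<ge> 2" "spherical_harmonic l Y" "0 < \<epsilon>" "\<epsilon> < 1" "p > 0"
  shows "\<exists>K. \<forall>\<^sub>F k in sequentially. Lp_norm_on p (annulus \<epsilon>) (u_eig c l k Y) \<le> K * j k powr (-1/2)"
proof -
  define \<nu> a where "\<nu> = nu_l CARD('d) c l" and "a = 1 - real CARD('d) / 2"
  have \<nu>: "\<nu> \<ge> 0" by (simp add: \<nu>_def nu_l_def)
  obtain M where "\<And>\<xi>. norm \<xi> = 1 \<Longrightarrow> \<bar>Y \<xi>\<bar> \<le> M"
    using spherical_harmonic_bounded[OF assms(3)] by blast
  then obtain C X where X: "0 < X" "0 \<le> C"
    and decay: "\<And>y. X \<le> norm y \<Longrightarrow> \<bar>bessel_profile \<nu> a Y y\<bar> \<le> C * norm y powr (a - 1/2)"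
    using bessel_profile_decay[OF \<nu>] by blast
  have "\<forall>\<^sub>F k in sequentially. X / \<epsilon> \<le> j k"
    using filterlim_bessel_zero_at_top[OF \<nu>] by (simp add: j_def \<nu>_def filterlim_at_top)
  then show ?thesis
  proof (intro exI[of _ "C * \<epsilon> powr (a - 1/2) * measure lebesgue (annulus \<epsilon> :: (real^'d) set)
                            powr (1 / real_of_ereal p)"], eventually_elim)
    case (elim k)
    have u: "u_eig c l k Y = (\<lambda>x. bessel_profile \<nu> a Y (j k *\<^sub>R x) / j k powr a)"
      by (simp add: u_eig_eq_bessel_profile j_def \<nu>_def a_def)
    have "j k > 0" using bessel_zero_pos[OF \<nu>] by (simp add: j_def \<nu>_def)
    moreover have "X \<le> j k * \<epsilon>" using elim assms(4) by (simp add: pos_divide_le_eq)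
    moreover have "a \<le> 1/2" using assms(2) by (simp add: a_def)
    moreover have "(\<lambda>x. bessel_profile \<nu> a Y (j k *\<^sub>R x) / j k powr a) \<in> borel_measurable lebesgue"
      using borel_measurable_u_eig[OF assms(3), of c k] unfolding u .
    ultimately have "Lp_norm_on p (annulus \<epsilon>) (\<lambda>x. bessel_profile \<nu> a Y (j k *\<^sub>R x) / j k powr a)
        \<le> C * \<epsilon> powr (a - 1/2) * measure lebesgue (annulus \<epsilon> :: (real^'d) set) powr (1 / real_of_ereal p)
          * j k powr (-1/2)"
      by (intro Lp_norm_on_annulus_dilate_le[where X=X]) (use decay X(2) assms(4-6) in auto)
    then show ?case unfolding u .
  qed
qed

lemma u_eig_ball_Lp_ge:
  fixes Y :: "real^'d \<Rightarrow> real" and c :: real and l :: nat and p :: ereal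
  defines "j \<equiv> bessel_zero (nu_l CARD('d) c l)"
  assumes "CARD('d) \<ge> 2" "spherical_harmonic l Y" "norm \<xi> = 1" "Y \<xi> \<noteq> 0" "p > 0"
  shows "\<exists>D>0. \<forall>\<^sub>F k in sequentially.
           D * j k powr (real CARD('d) / 2 - 1 - real CARD('d) / real_of_ereal p)
           \<le> Lp_norm_on p ball_domain (u_eig c l k Y)"
proof -
  define \<nu> a \<Phi> where "\<nu> = nu_l CARD('d) c l" and "a = 1 - real CARD('d) / 2"
    and "\<Phi> = bessel_profile \<nu> a Y"
  have \<nu>: "\<nu> \<ge> 0" by (simp add: \<nu>_def nu_l_def)
  have \<nu>a: "\<nu> + a \<ge> 0" using nu_l_ge[of "CARD('d)" c l] assms(2) by (simp add: \<nu>_def a_def)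
  obtain y\<^sub>0 \<rho> \<delta> where \<rho>: "0 < \<rho>" "0 < \<delta>" "\<And>z. z \<in> ball y\<^sub>0 \<rho> \<Longrightarrow> \<delta> \<le> \<bar>\<Phi> z\<bar>"
    using bessel_profile_abs_ge_on_ball[OF \<nu> spherical_harmonic_continuous_on_sphere[OF assms(3)] assms(4,5)]
    unfolding \<Phi>_def by blast
  obtain M where M: "\<And>\<xi>. norm \<xi> = 1 \<Longrightarrow> \<bar>Y \<xi>\<bar> \<le> M"
    using spherical_harmonic_bounded[OF assms(3)] by blast
  define D where "D = \<delta> * (unit_ball_vol CARD('d) * \<rho> ^ CARD('d)) powr (1 / real_of_ereal p)"
  have "unit_ball_vol CARD('d) * \<rho> ^ CARD('d) > 0" using \<rho>(1) by simp
  then have "D > 0" using \<rho>(2) unfolding D_def by (metis mult_pos_pos powr_gt_zero less_irrefl)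
  moreover have "\<forall>\<^sub>F k in sequentially. norm y\<^sub>0 + \<rho> \<le> j k"
    using filterlim_bessel_zero_at_top[OF \<nu>] by (simp add: j_def \<nu>_def filterlim_at_top)
  then have "\<forall>\<^sub>F k in sequentially.
      D * j k powr (real CARD('d) / 2 - 1 - real CARD('d) / real_of_ereal p)
      \<le> Lp_norm_on p ball_domain (u_eig c l k Y)"
  proof eventually_elim
    case (elim k)
    obtain B where B: "\<And>y. norm y \<le> j k \<Longrightarrow> \<bar>\<Phi> y\<bar> \<le> B"
      using bessel_profile_bounded[where Y=Y and R="j k", OF \<nu> \<nu>a M] by (auto simp: \<Phi>_def)
    have u: "u_eig c l k Y = (\<lambda>x. \<Phi> (j k *\<^sub>R x) / j k powr a)"
      by (simp add: u_eig_eq_bessel_profile \<Phi>_def j_def \<nu>_def a_def)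
    have meas: "(\<lambda>x. \<Phi> (j k *\<^sub>R x) / j k powr a) \<in> borel_measurable lebesgue"
      using borel_measurable_u_eig[OF assms(3), of c k] unfolding u .
    have e: "- a - real DIM(real^'d) / real_of_ereal p = real CARD('d) / 2 - 1 - real CARD('d) / real_of_ereal p"
      by (simp add: a_def)
    from Lp_norm_on_unit_ball_dilate_ge[OF meas B \<rho>(3) _ \<rho>(1) elim assms(6)] \<rho>(2)
    show ?case unfolding u D_def e ball_domain_eq by simp
  qed
  ultimately show ?thesis by blast
qed

lemma tendsto_ratio_powr_0:
  fixes N D j :: "nat \<Rightarrow> real"
  assumes j: "filterlim j at_top sequentially"
    and N: "\<forall>\<^sub>F k in sequentially. 0 \<le> N k \<and> N k \<le> A * j k powr \<alpha>"
    and D: "\<forall>\<^sub>F k in sequentially. B * j k powr \<beta> \<le> D k" "B > 0"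
    and "\<alpha> < \<beta>"
  shows "(\<lambda>k. N k / D k) \<longlonglongrightarrow> 0"
proof (rule tendsto_sandwich[OF _ _ tendsto_const])
  have "\<forall>\<^sub>F k in sequentially. j k > 0" using j by (simp add: filterlim_at_top_dense)
  with N D(1) show "\<forall>\<^sub>F k in sequentially. 0 \<le> N k / D k"
    by eventually_elim (use D(2) in \<open>smt (verit) divide_nonneg_pos mult_pos_pos powr_gt_zero\<close>)
  from \<open>\<forall>\<^sub>F k in sequentially. j k > 0\<close> N D(1)
  show "\<forall>\<^sub>F k in sequentially. N k / D k \<le> A / B * j k powr (\<alpha> - \<beta>)"
  proof eventually_elim
    case (elim k)
    then have "N k / D k \<le> A * j k powr \<alpha> / (B * j k powr \<beta>)"
      using D(2) by (intro frac_le) auto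
    also have "\<dots> = A / B * j k powr (\<alpha> - \<beta>)" by (simp add: powr_diff)
    finally show ?case .
  qed
  have "(\<lambda>k. j k powr (\<alpha> - \<beta>)) \<longlonglongrightarrow> 0" using tendsto_neg_powr[OF _ j] \<open>\<alpha> < \<beta>\<close> by simp
  from tendsto_mult_right_zero[OF this] show "(\<lambda>k. A / B * j k powr (\<alpha> - \<beta>)) \<longlonglongrightarrow> 0" .
qed

lemma Lp_exponent_gap:
  fixes p :: ereal
  assumes "d \<ge> 2" "ereal (2 * real d / (real d - 1)) < p"
  shows "0 < p" and "- 1/2 < real d / 2 - 1 - real d / real_of_ereal p"
proof -
  have "0 < 2 * real d / (real d - 1)" using assms(1) by simp
  then show "0 < p" using assms(2) by (metis ereal_less(2) order.strict_trans)
  show "- 1/2 < real d / 2 - 1 - real d / real_of_ereal p"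
  proof (cases p)
    case (real r)
    then have "2 * real d < r * (real d - 1)" using assms by (simp add: divide_less_eq)
    then have "real d / r < (real d - 1) / 2" using assms(1) \<open>0 < p\<close> real by (simp add: field_simps)
    then show ?thesis using real by simp
  qed (use assms(1) \<open>0 < p\<close> in auto)
qed

theorem corollary2p7:
  fixes Y :: "real^'d \<Rightarrow> real" and c \<epsilon> :: real and l :: nat and p :: ereal
  assumes "CARD('d) \<ge> 2"
    and "c \<ge> 0"
    and "spherical_harmonic l Y"
    and "\<exists>\<xi>::real^'d. norm \<xi> = 1 \<and> Y \<xi> \<noteq> 0"
    and "0 < \<epsilon>" and "\<epsilon> < 1"
    and "ereal (2 * real CARD('d) / (real CARD('d) - 1)) < p"
  shows "(\<lambda>k. Lp_norm_on p (annulus \<epsilon>) (u_eig c l k Y)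
              / Lp_norm_on p (ball_domain :: (real^'d) set) (u_eig c l k Y)) \<longlonglongrightarrow> 0"
proof -
  define j where "j = bessel_zero (nu_l CARD('d) c l)"
  obtain \<xi> :: "real^'d" where \<xi>: "norm \<xi> = 1" "Y \<xi> \<noteq> 0" using assms(4) by blast
  note p = Lp_exponent_gap[OF assms(1,7)]
  obtain K where upper: "\<forall>\<^sub>F k in sequentially. Lp_norm_on p (annulus \<epsilon>) (u_eig c l k Y) \<le> K * j k powr (-1/2)"
    using u_eig_annulus_Lp_le[OF assms(1,3,5,6) p(1)] unfolding j_def by blast
  obtain D where "D > 0" and lower: "\<forall>\<^sub>F k in sequentially.
      D * j k powr (real CARD('d) / 2 - 1 - real CARD('d) / real_of_ereal p)
      \<le> Lp_norm_on p ball_domain (u_eig c l k Y)"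
    using u_eig_ball_Lp_ge[OF assms(1,3) \<xi> p(1)] unfolding j_def by blast
  have "filterlim j at_top sequentially"
    unfolding j_def by (rule filterlim_bessel_zero_at_top) (simp add: nu_l_def)
  moreover from upper have "\<forall>\<^sub>F k in sequentially.
      0 \<le> Lp_norm_on p (annulus \<epsilon>) (u_eig c l k Y) \<and> Lp_norm_on p (annulus \<epsilon>) (u_eig c l k Y) \<le> K * j k powr (-1/2)"
    by eventually_elim (simp add: Lp_norm_on_nonneg[OF borel_measurable_u_eig[OF assms(3)]])
  ultimately show ?thesis by (rule tendsto_ratio_powr_0[OF _ _ lower \<open>D > 0\<close> p(2)])
qed

end
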